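(* Assume $f$ is $L$-smooth and the inexact polar assumption holds. Let $K\ge1$, $\bar\gamma:=\max_{0\le k\le K-1}\gamma_k$, $\bar\nu:=\max_{0\le k\le K-1}\nu_k$. Then Muon satisfies $$\eta(1-\bar\gamma)\sum_{k=0}^{K-1}\mathbb E\|\nabla f({\bm{X}}_k)\|_F\le f({\bm{X}}_0)-f_\star+\eta\big(1+\sqrt{d_0}(1+\bar\nu)\big)\sum_{k=0}^{K-1}\mathbb E\|{\bm{S}}_k\|_F+\frac{Ld_0}{2}\eta^2(1+\bar\nu)^2K.$$
   Context: Norms on $\mathbb{R}^{m\times n}$: $\|\cdot\|_F$ Frobenius, $\|\cdot\|_{\mathrm{op}}$ spectral, $\|\cdot\|_*$ nuclear; $\langle{\bm{A}},{\bm{B}}\rangle=\mathrm{tr}({\bm{A}}^\top{\bm{B}})$; $d_0:=\min\{m,n\}$. $f:\mathbb{R}^{m\times n}\to\mathbb R$ is differentiable with $f\ge f_\star>-\infty$; $L$-smooth means $\|\nabla f({\bm{X}})-\nabla f({\bm{Y}})\|_F\le L\|{\bm{X}}-{\bm{Y}}\|_F$. Muon: given $\beta\in(0,1)$, $\eta>0$, $B\in\mathbb N$, initial ${\bm{X}}_0,{\bm{C}}_{-1}$ and a (possibly randomized) map $\mathcal T$, for $k=0,1,\dots$: ${\bm{G}}_k=\frac1B\sum_{i=1}^B{\bm{G}}_k^i$, ${\bm{C}}_k=\beta{\bm{C}}_{k-1}+{\bm{G}}_k$, ${\bm{M}}_k=\beta{\bm{C}}_k+{\bm{G}}_k$, ${\bm{X}}_{k+1}={\bm{X}}_k-\eta\mathcal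 T({\bm{M}}_k)$. $\widetilde{{\bm{M}}}_k:=(1-\beta){\bm{M}}_k$, ${\bm{S}}_k:=\widetilde{{\bm{M}}}_k-\nabla f({\bm{X}}_k)$. Inexact polar assumption: for each $k$, letting $\mathcal G_k$ be the $\sigma$-field of the algorithm's history up to the formation of ${\bm{M}}_k$ (before any internal randomness used by $\mathcal T$ at step $k$), there are deterministic $\gamma_k\in[0,1)$, $\nu_k\ge0$ with $\mathbb E[\langle{\bm{M}}_k,\mathcal T({\bm{M}}_k)\rangle\mid\mathcal G_k]\ge(1-\gamma_k)\|{\bm{M}}_k\|_*$ and $\mathbb E[\|\mathcal T({\bm{M}}_k)\|_{\mathrm{op}}^2\mid\mathcal G_k]\le(1+\nu_k)^2$. All expectations are assumed finite. *)

theory Defs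
  imports "HOL-Analysis.Analysis" "HOL-Probability.Probability"
begin

text \<open>Matrices in R^{m x n} are rendered as real^'n^'m (rows indexed by 'm).
  On this type, norm is the Frobenius norm and the inner product is tr(A^T B).\<close>

definition opnorm :: "real^'n^'m \<Rightarrow> real" where
  "opnorm A = onorm (\<lambda>x. A *v x)"

text \<open>Nuclear norm, defined as the dual norm of the spectral norm.\<close>
definition nucnorm :: "real^'n^'m \<Rightarrow> real" where
  "nucnorm A = Sup {A \<bullet> B | B. opnorm B \<le> 1}"

text \<open>History sigma-field up to the formation of M_k: generated by the stochastic
  gradients G_j^i (j \<le> k, i < B) and the internal randomness xi_j of T for j < k
  (initial points X_0, C_{-1} are deterministic).\<close>
definition muon_history ::
  "'a measure \<Rightarrow> 'r measure \<Rightarrow> (nat \<Rightarrow> nat \<Rightarrow> 'a \<Rightarrow> real^'n^'m) \<Rightarrow> (nat \<Rightarrow> 'a \<Rightarrow> 'r)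
    \<Rightarrow> nat \<Rightarrow> nat \<Rightarrow> 'a measure" where
  "muon_history P R G \<xi> B k = sigma (space P)
     ({G j i -` A \<inter> space P | j i A. j \<le> k \<and> i < B \<and> A \<in> sets borel}
      \<union> {\<xi> j -` A \<inter> space P | j A. j < k \<and> A \<in> sets R})"

end

theory Submission
  imports Defs
begin

text \<open>One Muon step is analysed with the descent lemma for the L-smooth f, the Frobenius norm of
  the update being at most sqrt d_0 times its spectral norm. Writing grad f(X_k) = (1 - beta) M_k - S_k,
  the nuclear norm dominates the Frobenius norm, so the inexact polar condition bounds the expected
  alignment E <grad f(X_k), T(M_k)> from below by (1 - gamma_k) (E |grad f(X_k)| - E |S_k|) up to the
  cross term E [ |S_k| |T(M_k)|_op ]. Since S_k is known at the time T is applied, that cross term is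
  handled by conditioning on the history: conditional Jensen turns the second moment bound into
  E [ |T(M_k)|_op | G_k ] <= 1 + nu_k. Summing over k telescopes f(X_k), and f >= f_star.\<close>

lemma power2_norm_vec: "(norm (x::'a::real_normed_vector^'n))\<^sup>2 = (\<Sum>i\<in>UNIV. (norm (x$i))\<^sup>2)"
  by (simp add: norm_vec_def L2_set_def sum_nonneg)

lemma power2_norm_matrix_columns:
  "(norm (A::real^'n^'m))\<^sup>2 = (\<Sum>j\<in>UNIV. (norm (column j A))\<^sup>2)"
proof -
  have "(norm A)\<^sup>2 = (\<Sum>i\<in>UNIV. \<Sum>j\<in>UNIV. (A$i$j)\<^sup>2)"
    by (simp add: power2_norm_vec)
  also have "\<dots> = (\<Sum>j\<in>UNIV. \<Sum>i\<in>UNIV. (A$i$j)\<^sup>2)"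
    by (rule sum.swap)
  finally show ?thesis
    by (simp add: power2_norm_vec column_def)
qed

lemma opnorm_nonneg: "0 \<le> opnorm A"
  unfolding opnorm_def by (rule onorm_pos_le[OF matrix_vector_mul_bounded_linear])

lemma norm_matrix_vector_le_opnorm: "norm (A *v x) \<le> opnorm A * norm x"
  unfolding opnorm_def using onorm[OF matrix_vector_mul_bounded_linear] by blast

lemma norm_row_le_opnorm: "norm ((A::real^'n^'m) $ i) \<le> opnorm A"
proof -
  have "(norm (A$i))\<^sup>2 = (A *v (A$i)) $ i"
    by (simp add: matrix_vector_mul_component power2_norm_eq_inner)
  also have "\<dots> \<le> norm (A *v (A$i))"
    using component_le_norm_cart[of "A *v (A$i)" i] by simp
  also have "\<dots> \<le> opnorm A * norm (A$i)"
    by (rule norm_matrix_vector_le_opnorm)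
  finally show ?thesis
    using opnorm_nonneg[of A] by (cases "A$i = 0") (auto simp: power2_eq_square)
qed

lemma power2_norm_le_card_rows_opnorm:
  "(norm (A::real^'n^'m))\<^sup>2 \<le> real CARD('m) * (opnorm A)\<^sup>2"
proof -
  have "(norm A)\<^sup>2 \<le> (\<Sum>i\<in>(UNIV::'m set). (opnorm A)\<^sup>2)"
    unfolding power2_norm_vec[of A]
    by (intro sum_mono power_mono norm_row_le_opnorm norm_ge_zero)
  then show ?thesis by simp
qed

lemma power2_norm_le_card_columns_opnorm:
  "(norm (A::real^'n^'m))\<^sup>2 \<le> real CARD('n) * (opnorm A)\<^sup>2"
proof -
  have "(norm A)\<^sup>2 \<le> (\<Sum>j\<in>(UNIV::'n set). (opnorm A)\<^sup>2)"
    unfolding power2_norm_matrix_columns opnorm_def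
    by (intro sum_mono power_mono norm_column_le_onorm norm_ge_zero)
  then show ?thesis by simp
qed

lemma power2_norm_le_min_card_opnorm:
  "(norm (A::real^'n^'m))\<^sup>2 \<le> real (min CARD('m) CARD('n)) * (opnorm A)\<^sup>2"
  using power2_norm_le_card_rows_opnorm[of A] power2_norm_le_card_columns_opnorm[of A]
  by (cases "CARD('m) \<le> CARD('n)") (simp_all add: min_def)

lemma norm_le_sqrt_min_card_opnorm:
  "norm (A::real^'n^'m) \<le> sqrt (real (min CARD('m) CARD('n))) * opnorm A"
  using real_sqrt_le_mono[OF power2_norm_le_min_card_opnorm[of A]] opnorm_nonneg[of A]
  by (simp add: real_sqrt_mult)

lemma opnorm_le_norm: "opnorm (A::real^'n^'m) \<le> norm A"
  unfolding opnorm_def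
proof (rule onorm_le)
  fix x :: "real^'n"
  have "(norm (A *v x))\<^sup>2 = (\<Sum>i\<in>UNIV. (A$i \<bullet> x)\<^sup>2)"
    by (simp add: power2_norm_vec matrix_vector_mult_def inner_vec_def)
  also have "\<dots> \<le> (\<Sum>i\<in>UNIV. (norm (A$i) * norm x)\<^sup>2)"
    by (intro sum_mono power2_le_iff_abs_le[THEN iffD2] Cauchy_Schwarz_ineq2) simp
  also have "\<dots> = (norm A * norm x)\<^sup>2"
    by (simp add: power2_norm_vec[of A] power_mult_distrib sum_distrib_right)
  finally show "norm (A *v x) \<le> norm A * norm x"
    by (rule power2_le_imp_le) simp
qed

text \<open>Test against A / norm A, which has spectral norm at most 1 (and is 0 when A = 0).\<close>
lemma norm_le_nucnorm: "norm (A::real^'n^'m) \<le> nucnorm A"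
proof -
  let ?B = "(1 / norm A) *\<^sub>R A"
  have "norm ?B \<le> 1"
    by (cases "A = 0") simp_all
  then have "opnorm ?B \<le> 1"
    using opnorm_le_norm[of ?B] by linarith
  moreover have "A \<bullet> ?B = norm A"
    by (simp add: power2_norm_eq_inner[symmetric] power2_eq_square)
  ultimately have mem: "norm A \<in> {A \<bullet> B | B. opnorm B \<le> 1}"
    by (metis (mono_tags, lifting) mem_Collect_eq)
  have "bdd_above {A \<bullet> B | B. opnorm B \<le> 1}"
  proof (rule bdd_aboveI)
    fix y assume "y \<in> {A \<bullet> B | B. opnorm B \<le> 1}"
    then obtain B where y: "y = A \<bullet> B" "opnorm B \<le> 1" by blast
    have "y \<le> norm A * norm B"
      using y(1) norm_cauchy_schwarz by simp
    also have "\<dots> \<le> norm A * (sqrt (real (min CARD('m) CARD('n))) * opnorm B)"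
      by (rule mult_left_mono[OF norm_le_sqrt_min_card_opnorm norm_ge_zero])
    also have "\<dots> \<le> norm A * sqrt (real (min CARD('m) CARD('n)))"
      using y(2) by (intro mult_left_mono mult_left_le) simp_all
    finally show "y \<le> norm A * sqrt (real (min CARD('m) CARD('n)))" .
  qed
  with mem show ?thesis
    unfolding nucnorm_def by (rule cSup_upper)
qed

lemma lipschitz_bound_nonneg:
  fixes g :: "'a::euclidean_space \<Rightarrow> 'b::real_normed_vector"
  assumes "\<And>x y. norm (g x - g y) \<le> L * norm (x - y)"
  shows "0 \<le> L"
proof -
  have "0 \<le> norm (g One - g 0)"
    by simp
  also have "\<dots> \<le> L * norm (One :: 'a)"
    using assms[of One 0] by simp
  finally show ?thesis
    using One_non_0 by (simp add: zero_le_mult_iff)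
qed

lemma smooth_quadratic_upper_bound:
  fixes f :: "'v::real_inner \<Rightarrow> real" and g :: "'v \<Rightarrow> 'v"
  assumes grad: "\<And>x. (f has_derivative (\<lambda>h. g x \<bullet> h)) (at x)"
    and lip: "\<And>x y. norm (g x - g y) \<le> L * norm (x - y)"
  shows "f y \<le> f x + g x \<bullet> (y - x) + L / 2 * (norm (y - x))\<^sup>2"
proof -
  define h where "h = y - x"
  define \<phi> where "\<phi> t = f (x + t *\<^sub>R h) - t * (g x \<bullet> h) - L / 2 * t\<^sup>2 * (norm h)\<^sup>2" for t
  have "((\<lambda>t. x + t *\<^sub>R h) has_derivative (\<lambda>s. s *\<^sub>R h)) (at t)" for t
    by (auto intro!: derivative_eq_intros)
  from has_derivative_compose[OF this grad]
  have "((\<lambda>t. f (x + t *\<^sub>R h)) has_real_derivative g (x + t *\<^sub>R h) \<bullet> h) (at t)" for t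
    by (simp add: has_field_derivative_def mult_commute_abs)
  then have \<phi>_deriv: "(\<phi> has_real_derivative (g (x + t *\<^sub>R h) - g x) \<bullet> h - L * t * (norm h)\<^sup>2) (at t)"
    for t
    unfolding \<phi>_def by (auto intro!: derivative_eq_intros simp: inner_diff_left)
  have \<phi>_deriv_nonpos: "(g (x + t *\<^sub>R h) - g x) \<bullet> h - L * t * (norm h)\<^sup>2 \<le> 0" if "0 \<le> t" for t
  proof -
    have "(g (x + t *\<^sub>R h) - g x) \<bullet> h \<le> norm (g (x + t *\<^sub>R h) - g x) * norm h"
      by (rule norm_cauchy_schwarz)
    also have "\<dots> \<le> L * norm (t *\<^sub>R h) * norm h"
      using lip[of "x + t *\<^sub>R h" x] by (intro mult_right_mono) auto
    finally show ?thesis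
      using that by (simp add: power2_eq_square)
  qed
  have "\<phi> 1 \<le> \<phi> 0"
    using \<phi>_deriv \<phi>_deriv_nonpos by (intro DERIV_nonpos_imp_nonincreasing[of 0 1]) fastforce+
  then show ?thesis
    unfolding \<phi>_def h_def by simp
qed

lemma space_muon_history: "space (muon_history P R G \<xi> B k) = space P"
  unfolding muon_history_def by (rule space_measure_of_conv)

lemma sets_muon_history: "sets (muon_history P R G \<xi> B k) = sigma_sets (space P)
     ({G j i -` A \<inter> space P | j i A. j \<le> k \<and> i < B \<and> A \<in> sets borel}
      \<union> {\<xi> j -` A \<inter> space P | j A. j < k \<and> A \<in> sets R})"
  unfolding muon_history_def by (rule sets_measure_of) auto

lemma measurable_muon_history_G:
  fixes G :: "nat \<Rightarrow> nat \<Rightarrow> 'a \<Rightarrow> real^'n^'m"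
  assumes "j \<le> k" "i < B"
  shows "G j i \<in> borel_measurable (muon_history P R G \<xi> B k)"
proof (rule measurableI)
  fix A :: "(real^'n^'m) set" assume "A \<in> sets borel"
  then show "G j i -` A \<inter> space (muon_history P R G \<xi> B k) \<in> sets (muon_history P R G \<xi> B k)"
    using assms unfolding space_muon_history sets_muon_history by (intro sigma_sets.Basic) blast
qed simp

lemma measurable_muon_history_xi:
  assumes "\<xi> j \<in> P \<rightarrow>\<^sub>M R" "j < k"
  shows "\<xi> j \<in> muon_history P R G \<xi> B k \<rightarrow>\<^sub>M R"
proof (rule measurableI)
  fix A assume "A \<in> sets R"
  then show "\<xi> j -` A \<inter> space (muon_history P R G \<xi> B k) \<in> sets (muon_history P R G \<xi> B k)"
    using assms unfolding space_muon_history sets_muon_history by (intro sigma_sets.Basic) blast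
qed (use assms(1) in \<open>auto simp: space_muon_history intro: measurable_space\<close>)

lemma subalgebra_muon_history:
  fixes G :: "nat \<Rightarrow> nat \<Rightarrow> 'a \<Rightarrow> real^'n^'m"
  assumes "\<And>j i. G j i \<in> borel_measurable P" "\<And>j. \<xi> j \<in> P \<rightarrow>\<^sub>M R"
  shows "subalgebra P (muon_history P R G \<xi> B k)"
  unfolding subalgebra_def space_muon_history sets_muon_history
  using assms by (intro conjI refl sets.sigma_sets_subset subsetI) (auto intro: measurable_sets)

context sigma_finite_subalgebra
begin

lemma integral_le_of_le_real_cond_exp:
  assumes "integrable M f" "integrable M g" "AE x in M. g x \<le> real_cond_exp M F f x"
  shows "integral\<^sup>L M g \<le> integral\<^sup>L M f"
proof -
  have "integral\<^sup>L M g \<le> (\<integral>x. real_cond_exp M F f x \<partial>M)"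
    using assms real_cond_exp_int(1)[OF assms(1)] by (intro integral_mono_AE)
  then show ?thesis
    using real_cond_exp_int(2)[OF assms(1)] by simp
qed

lemma integral_le_of_real_cond_exp_le:
  assumes "integrable M f" "integrable M g" "AE x in M. real_cond_exp M F f x \<le> g x"
  shows "integral\<^sup>L M f \<le> integral\<^sup>L M g"
proof -
  have "(\<integral>x. real_cond_exp M F f x \<partial>M) \<le> integral\<^sup>L M g"
    using assms real_cond_exp_int(1)[OF assms(1)] by (intro integral_mono_AE)
  then show ?thesis
    using real_cond_exp_int(2)[OF assms(1)] by simp
qed

end

context finite_measure_subalgebra
begin

text \<open>Conditional Jensen turns E[u^2 | F] \<le> c^2 into E[u | F] \<le> c; the F-measurable factor s
  can be moved inside the conditional expectation.\<close>
lemma integral_mult_le_of_real_cond_exp_power2_le: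
  assumes s: "s \<in> borel_measurable F" "\<And>x. 0 \<le> s x" "integrable M s"
    and u: "\<And>x. 0 \<le> u x" "integrable M (\<lambda>x. (u x)\<^sup>2)"
    and su: "integrable M (\<lambda>x. s x * u x)"
    and c: "0 \<le> c" "AE x in M. real_cond_exp M F (\<lambda>x. (u x)\<^sup>2) x \<le> c\<^sup>2"
  shows "(\<integral>x. s x * u x \<partial>M) \<le> c * integral\<^sup>L M s"
proof -
  have u_meas: "u \<in> borel_measurable M"
  proof -
    have "(\<lambda>x. sqrt ((u x)\<^sup>2)) \<in> borel_measurable M"
      using borel_measurable_integrable[OF u(2)] by measurable
    then show ?thesis using u(1) by simp
  qed
  have u_int: "integrable M u"
  proof (rule Bochner_Integration.integrable_bound[OF _ u_meas])
    show "integrable M (\<lambda>x. 1 + (u x)\<^sup>2)"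
      using u(2) by simp
    have "u x \<le> 1 + (u x)\<^sup>2" for x
      using u(1)[of x] zero_le_power2[of "u x - 1"] by (simp add: power2_diff)
    then show "AE x in M. norm (u x) \<le> norm (1 + (u x)\<^sup>2)"
      using u(1) by simp
  qed
  have "AE x in M. (real_cond_exp M F u x)\<^sup>2 \<le> real_cond_exp M F (\<lambda>x. (u x)\<^sup>2) x"
    using u_int u(2)
    by (intro real_cond_exp_jensens_inequality(2)[where I=UNIV and a=0 and b=0])
       (auto intro: convex_power2)
  moreover have "AE x in M. 0 \<le> real_cond_exp M F u x"
    using u(1) u_meas by (intro real_cond_exp_pos) auto
  ultimately have cond_exp_le: "AE x in M. real_cond_exp M F u x \<le> c"
    using c(2) by eventually_elim (use c(1) in \<open>auto intro: power2_le_imp_le order_trans\<close>)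
  have int: "integrable M (\<lambda>x. s x * real_cond_exp M F u x)"
    and eq: "(\<integral>x. s x * real_cond_exp M F u x \<partial>M) = (\<integral>x. s x * u x \<partial>M)"
    using real_cond_exp_intg[OF su s(1) u_meas] by auto
  have "(\<integral>x. s x * real_cond_exp M F u x \<partial>M) \<le> (\<integral>x. s x * c \<partial>M)"
    using cond_exp_le s(2) s(3) int
    by (intro integral_mono_AE) (auto elim!: eventually_mono intro: mult_left_mono)
  then show ?thesis
    using eq by (simp add: mult.commute)
qed

end

lemma integral_descent_step:
  fixes f :: "real^'n^'m \<Rightarrow> real" and gradf :: "real^'n^'m \<Rightarrow> real^'n^'m"
    and x U :: "'a \<Rightarrow> real^'n^'m"
  assumes grad: "\<And>y. (f has_derivative (\<lambda>h. gradf y \<bullet> h)) (at y)"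
    and smooth: "\<And>y z. norm (gradf y - gradf z) \<le> L * norm (y - z)"
    and int: "integrable P (\<lambda>\<omega>. f (x \<omega>))" "integrable P (\<lambda>\<omega>. f (x \<omega> - \<eta> *\<^sub>R U \<omega>))"
      "integrable P (\<lambda>\<omega>. gradf (x \<omega>) \<bullet> U \<omega>)" "integrable P (\<lambda>\<omega>. (opnorm (U \<omega>))\<^sup>2)"
  shows "(\<integral>\<omega>. f (x \<omega> - \<eta> *\<^sub>R U \<omega>) \<partial>P)
    \<le> (\<integral>\<omega>. f (x \<omega>) \<partial>P) - \<eta> * (\<integral>\<omega>. gradf (x \<omega>) \<bullet> U \<omega> \<partial>P)
      + L * real (min CARD('m) CARD('n)) / 2 * \<eta>\<^sup>2 * (\<integral>\<omega>. (opnorm (U \<omega>))\<^sup>2 \<partial>P)"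
proof -
  let ?c = "L * real (min CARD('m) CARD('n)) / 2 * \<eta>\<^sup>2"
  have pointwise: "f (x \<omega> - \<eta> *\<^sub>R U \<omega>)
      \<le> f (x \<omega>) - \<eta> * (gradf (x \<omega>) \<bullet> U \<omega>) + ?c * (opnorm (U \<omega>))\<^sup>2" for \<omega>
  proof -
    have "f (x \<omega> - \<eta> *\<^sub>R U \<omega>)
        \<le> f (x \<omega>) - \<eta> * (gradf (x \<omega>) \<bullet> U \<omega>) + L / 2 * (norm (\<eta> *\<^sub>R U \<omega>))\<^sup>2"
      using smooth_quadratic_upper_bound[OF grad smooth, of "x \<omega> - \<eta> *\<^sub>R U \<omega>" "x \<omega>"] by simp
    moreover have "L / 2 * (norm (\<eta> *\<^sub>R U \<omega>))\<^sup>2 \<le> ?c * (opnorm (U \<omega>))\<^sup>2"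
      using mult_left_mono[OF power2_norm_le_min_card_opnorm[of "U \<omega>"], of "L / 2 * \<eta>\<^sup>2"]
        lipschitz_bound_nonneg[OF smooth]
      by (simp add: power_mult_distrib mult_ac)
    ultimately show ?thesis
      by linarith
  qed
  have "(\<integral>\<omega>. f (x \<omega> - \<eta> *\<^sub>R U \<omega>) \<partial>P)
      \<le> (\<integral>\<omega>. f (x \<omega>) - \<eta> * (gradf (x \<omega>) \<bullet> U \<omega>) + ?c * (opnorm (U \<omega>))\<^sup>2 \<partial>P)"
    using int pointwise by (intro integral_mono) auto
  then show ?thesis
    using int by simp
qed

lemma integral_inner_gradient_lower_bound:
  fixes P F :: "'a measure" and g M U :: "'a \<Rightarrow> real^'n^'m"
  assumes "finite_measure_subalgebra P F"
    and "\<beta> \<le> 1" "\<gamma> \<le> 1" "0 \<le> \<nu>"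
    and S_meas: "(\<lambda>\<omega>. norm ((1 - \<beta>) *\<^sub>R M \<omega> - g \<omega>)) \<in> borel_measurable F"
    and polar: "AE \<omega> in P. real_cond_exp P F (\<lambda>\<omega>. M \<omega> \<bullet> U \<omega>) \<omega> \<ge> (1 - \<gamma>) * nucnorm (M \<omega>)"
      "AE \<omega> in P. real_cond_exp P F (\<lambda>\<omega>. (opnorm (U \<omega>))\<^sup>2) \<omega> \<le> (1 + \<nu>)\<^sup>2"
    and int: "integrable P (\<lambda>\<omega>. norm (g \<omega>))" "integrable P (\<lambda>\<omega>. norm ((1 - \<beta>) *\<^sub>R M \<omega> - g \<omega>))"
      "integrable P (\<lambda>\<omega>. nucnorm (M \<omega>))" "integrable P (\<lambda>\<omega>. M \<omega> \<bullet> U \<omega>)"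
      "integrable P (\<lambda>\<omega>. g \<omega> \<bullet> U \<omega>)" "integrable P (\<lambda>\<omega>. (opnorm (U \<omega>))\<^sup>2)"
      "integrable P (\<lambda>\<omega>. norm ((1 - \<beta>) *\<^sub>R M \<omega> - g \<omega>) * opnorm (U \<omega>))"
  shows "(1 - \<gamma>) * (\<integral>\<omega>. norm (g \<omega>) \<partial>P)
           - (1 - \<gamma> + sqrt (real (min CARD('m) CARD('n))) * (1 + \<nu>))
             * (\<integral>\<omega>. norm ((1 - \<beta>) *\<^sub>R M \<omega> - g \<omega>) \<partial>P)
         \<le> (\<integral>\<omega>. g \<omega> \<bullet> U \<omega> \<partial>P)"
proof -
  interpret finite_measure_subalgebra P F by (rule assms(1))
  define s where "s = sqrt (real (min CARD('m) CARD('n)))"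
  define S where "S \<omega> = (1 - \<beta>) *\<^sub>R M \<omega> - g \<omega>" for \<omega>
  have grad_le: "norm (g \<omega>) - norm (S \<omega>) \<le> (1 - \<beta>) * nucnorm (M \<omega>)" for \<omega>
  proof -
    have "norm (g \<omega>) \<le> (1 - \<beta>) * norm (M \<omega>) + norm (S \<omega>)"
      using norm_triangle_ineq4[of "(1 - \<beta>) *\<^sub>R M \<omega>" "S \<omega>"] \<open>\<beta> \<le> 1\<close> by (simp add: S_def)
    then show ?thesis
      using mult_left_mono[OF norm_le_nucnorm[of "M \<omega>"], of "1 - \<beta>"] \<open>\<beta> \<le> 1\<close> by simp
  qed
  have inner_ge: "(1 - \<beta>) * (M \<omega> \<bullet> U \<omega>) - s * (norm (S \<omega>) * opnorm (U \<omega>)) \<le> g \<omega> \<bullet> U \<omega>" for \<omega>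
  proof -
    have "S \<omega> \<bullet> U \<omega> \<le> norm (S \<omega>) * norm (U \<omega>)"
      by (rule norm_cauchy_schwarz)
    also have "\<dots> \<le> norm (S \<omega>) * (s * opnorm (U \<omega>))"
      unfolding s_def by (intro mult_left_mono norm_le_sqrt_min_card_opnorm norm_ge_zero)
    finally show ?thesis
      by (simp add: S_def inner_diff_left algebra_simps)
  qed
  have "(\<integral>\<omega>. norm (g \<omega>) - norm (S \<omega>) \<partial>P) \<le> (\<integral>\<omega>. (1 - \<beta>) * nucnorm (M \<omega>) \<partial>P)"
    using grad_le int unfolding S_def by (intro integral_mono) auto
  then have "(1 - \<gamma>) * ((\<integral>\<omega>. norm (g \<omega>) \<partial>P) - (\<integral>\<omega>. norm (S \<omega>) \<partial>P))
      \<le> (1 - \<gamma>) * ((1 - \<beta>) * (\<integral>\<omega>. nucnorm (M \<omega>) \<partial>P))"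
    using int \<open>\<gamma> \<le> 1\<close> unfolding S_def by (intro mult_left_mono) auto
  also have "\<dots> = (1 - \<beta>) * (\<integral>\<omega>. (1 - \<gamma>) * nucnorm (M \<omega>) \<partial>P)"
    by simp
  also have "\<dots> \<le> (1 - \<beta>) * (\<integral>\<omega>. M \<omega> \<bullet> U \<omega> \<partial>P)"
    using polar(1) int \<open>\<beta> \<le> 1\<close> by (intro mult_left_mono integral_le_of_le_real_cond_exp) auto
  also have "\<dots> \<le> (\<integral>\<omega>. g \<omega> \<bullet> U \<omega> \<partial>P) + s * (\<integral>\<omega>. norm (S \<omega>) * opnorm (U \<omega>) \<partial>P)"
  proof -
    have "(\<integral>\<omega>. (1 - \<beta>) * (M \<omega> \<bullet> U \<omega>) - s * (norm (S \<omega>) * opnorm (U \<omega>)) \<partial>P)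
        \<le> (\<integral>\<omega>. g \<omega> \<bullet> U \<omega> \<partial>P)"
      using inner_ge int unfolding S_def by (intro integral_mono) auto
    then show ?thesis
      using int unfolding S_def by simp
  qed
  also have "\<dots> \<le> (\<integral>\<omega>. g \<omega> \<bullet> U \<omega> \<partial>P) + s * ((1 + \<nu>) * (\<integral>\<omega>. norm (S \<omega>) \<partial>P))"
    using S_meas polar(2) int \<open>0 \<le> \<nu>\<close> opnorm_nonneg unfolding S_def s_def
    by (intro add_left_mono mult_left_mono integral_mult_le_of_real_cond_exp_power2_le) auto
  finally show ?thesis
    unfolding s_def S_def by (simp add: algebra_simps)
qed

lemma muon_step_descent:
  fixes P F :: "'a measure" and f :: "real^'n^'m \<Rightarrow> real" and gradf :: "real^'n^'m \<Rightarrow> real^'n^'m"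
    and x M U :: "'a \<Rightarrow> real^'n^'m"
  assumes P: "prob_space P" and F: "subalgebra P F"
    and grad: "\<And>y. (f has_derivative (\<lambda>h. gradf y \<bullet> h)) (at y)"
    and smooth: "\<And>y z. norm (gradf y - gradf z) \<le> L * norm (y - z)"
    and "0 \<le> \<eta>" "\<beta> \<le> 1" "0 \<le> \<gamma>" "\<gamma> \<le> 1" "0 \<le> \<nu>"
    and meas: "x \<in> borel_measurable F" "M \<in> borel_measurable F"
    and polar: "AE \<omega> in P. real_cond_exp P F (\<lambda>\<omega>. M \<omega> \<bullet> U \<omega>) \<omega> \<ge> (1 - \<gamma>) * nucnorm (M \<omega>)"
      "AE \<omega> in P. real_cond_exp P F (\<lambda>\<omega>. (opnorm (U \<omega>))\<^sup>2) \<omega> \<le> (1 + \<nu>)\<^sup>2"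
    and int: "integrable P (\<lambda>\<omega>. f (x \<omega>))" "integrable P (\<lambda>\<omega>. f (x \<omega> - \<eta> *\<^sub>R U \<omega>))"
      "integrable P (\<lambda>\<omega>. norm (gradf (x \<omega>)))"
      "integrable P (\<lambda>\<omega>. norm ((1 - \<beta>) *\<^sub>R M \<omega> - gradf (x \<omega>)))"
      "integrable P (\<lambda>\<omega>. nucnorm (M \<omega>))" "integrable P (\<lambda>\<omega>. M \<omega> \<bullet> U \<omega>)"
      "integrable P (\<lambda>\<omega>. gradf (x \<omega>) \<bullet> U \<omega>)" "integrable P (\<lambda>\<omega>. (opnorm (U \<omega>))\<^sup>2)"
      "integrable P (\<lambda>\<omega>. norm ((1 - \<beta>) *\<^sub>R M \<omega> - gradf (x \<omega>)) * opnorm (U \<omega>))"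
  shows "\<eta> * (1 - \<gamma>) * (\<integral>\<omega>. norm (gradf (x \<omega>)) \<partial>P)
    \<le> (\<integral>\<omega>. f (x \<omega>) \<partial>P) - (\<integral>\<omega>. f (x \<omega> - \<eta> *\<^sub>R U \<omega>) \<partial>P)
      + \<eta> * (1 + sqrt (real (min CARD('m) CARD('n))) * (1 + \<nu>))
          * (\<integral>\<omega>. norm ((1 - \<beta>) *\<^sub>R M \<omega> - gradf (x \<omega>)) \<partial>P)
      + L * real (min CARD('m) CARD('n)) / 2 * \<eta>\<^sup>2 * (1 + \<nu>)\<^sup>2"
proof -
  interpret prob_space P by (rule P)
  interpret finite_measure_subalgebra P F
    by (intro finite_measure_subalgebra.intro finite_measure_subalgebra_axioms.intro
        finite_measure_axioms F)
  have L: "0 \<le> L"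
    by (rule lipschitz_bound_nonneg[OF smooth])
  have "L-lipschitz_on UNIV gradf"
    using smooth L by (intro lipschitz_onI) (auto simp: dist_norm)
  then have [measurable]: "gradf \<in> borel_measurable borel"
    by (intro borel_measurable_continuous_onI lipschitz_on_continuous_on)
  note [measurable] = meas
  define r where "r = sqrt (real (min CARD('m) CARD('n))) * (1 + \<nu>)"
  define c where "c = L * real (min CARD('m) CARD('n)) / 2 * \<eta>\<^sup>2"
  define a where "a = (\<integral>\<omega>. norm (gradf (x \<omega>)) \<partial>P)"
  define s where "s = (\<integral>\<omega>. norm ((1 - \<beta>) *\<^sub>R M \<omega> - gradf (x \<omega>)) \<partial>P)"
  define p where "p = (\<integral>\<omega>. gradf (x \<omega>) \<bullet> U \<omega> \<partial>P)"
  define q where "q = (\<integral>\<omega>. (opnorm (U \<omega>))\<^sup>2 \<partial>P)"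
  have descent: "(\<integral>\<omega>. f (x \<omega> - \<eta> *\<^sub>R U \<omega>) \<partial>P) \<le> (\<integral>\<omega>. f (x \<omega>) \<partial>P) - \<eta> * p + c * q"
    unfolding p_def q_def c_def by (rule integral_descent_step[OF grad smooth int(1,2,7,8)])
  have "(1 - \<gamma>) * a - (1 - \<gamma> + r) * s \<le> p"
    unfolding a_def s_def p_def r_def
    using \<open>\<beta> \<le> 1\<close> \<open>\<gamma> \<le> 1\<close> \<open>0 \<le> \<nu>\<close> polar int(3-9)
    by (intro integral_inner_gradient_lower_bound) (unfold_locales, measurable)
  moreover have "(1 - \<gamma> + r) * s \<le> (1 + r) * s"
    using \<open>0 \<le> \<gamma>\<close> unfolding s_def by (intro mult_right_mono) auto
  ultimately have "(1 - \<gamma>) * a \<le> p + (1 + r) * s"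
    by linarith
  from mult_left_mono[OF this \<open>0 \<le> \<eta>\<close>]
  have align: "\<eta> * (1 - \<gamma>) * a \<le> \<eta> * p + \<eta> * (1 + r) * s"
    by (simp only: distrib_left[of \<eta> p] mult.assoc)
  have "q \<le> (1 + \<nu>)\<^sup>2"
    using integral_le_of_real_cond_exp_le[OF int(8) _ polar(2)] unfolding q_def by (simp add: prob_space)
  then have "c * q \<le> c * (1 + \<nu>)\<^sup>2"
    unfolding c_def using L by (intro mult_left_mono) auto
  with descent align show ?thesis
    unfolding a_def s_def c_def r_def by linarith
qed

lemma muon_iterates_measurable_history:
  fixes G :: "nat \<Rightarrow> nat \<Rightarrow> 'a \<Rightarrow> real^'n^'m" and T :: "real^'n^'m \<Rightarrow> 'r \<Rightarrow> real^'n^'m"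
    and Gb C M X :: "nat \<Rightarrow> 'a \<Rightarrow> real^'n^'m"
  assumes xi_meas: "\<And>k. \<xi> k \<in> P \<rightarrow>\<^sub>M R"
    and T_meas: "(\<lambda>(A, r). T A r) \<in> borel \<Otimes>\<^sub>M R \<rightarrow>\<^sub>M borel"
    and Gb_def: "\<And>k \<omega>. Gb k \<omega> = (1 / real B) *\<^sub>R (\<Sum>i<B. G k i \<omega>)"
    and C0: "\<And>\<omega>. C 0 \<omega> = \<beta> *\<^sub>R Cm1 + Gb 0 \<omega>"
    and CSuc: "\<And>k \<omega>. C (Suc k) \<omega> = \<beta> *\<^sub>R C k \<omega> + Gb (Suc k) \<omega>"
    and M_def: "\<And>k \<omega>. M k \<omega> = \<beta> *\<^sub>R C k \<omega> + Gb k \<omega>"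
    and X0: "\<And>\<omega>. X 0 \<omega> = X0"
    and XSuc: "\<And>k \<omega>. X (Suc k) \<omega> = X k \<omega> - \<eta> *\<^sub>R T (M k \<omega>) (\<xi> k \<omega>)"
  shows "M k \<in> borel_measurable (muon_history P R G \<xi> B k)"
    and "X k \<in> borel_measurable (muon_history P R G \<xi> B k)"
proof -
  let ?H = "muon_history P R G \<xi> B k"
  have Gb: "Gb j \<in> borel_measurable ?H" if "j \<le> k" for j
    unfolding Gb_def[abs_def] using measurable_muon_history_G[OF that] by measurable
  have C: "C j \<in> borel_measurable ?H" if "j \<le> k" for j
    using that
  proof (induction j)
    case 0
    then show ?case
      using Gb[of 0] unfolding C0[abs_def] by measurable
  next
    case (Suc j)
    then have "C j \<in> borel_measurable ?H" "Gb (Suc j) \<in> borel_measurable ?H"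
      using Gb by simp_all
    then show ?case
      unfolding CSuc[abs_def] by measurable
  qed
  have M: "M j \<in> borel_measurable ?H" if "j \<le> k" for j
    using Gb[OF that] C[OF that] unfolding M_def[abs_def] by measurable
  have X: "X j \<in> borel_measurable ?H" if "j \<le> k" for j
    using that
  proof (induction j)
    case 0
    then show ?case
      unfolding X0[abs_def] by simp
  next
    case (Suc j)
    have "\<xi> j \<in> ?H \<rightarrow>\<^sub>M R"
      using Suc.prems by (intro measurable_muon_history_xi xi_meas) simp
    then have "(\<lambda>\<omega>. (\<lambda>(A, r). T A r) (M j \<omega>, \<xi> j \<omega>)) \<in> borel_measurable ?H"
      using M[of j] Suc.prems by (intro measurable_compose[OF measurable_Pair T_meas]) simp_all
    with Suc show ?case
      unfolding XSuc[abs_def] by simp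
  qed
  show "M k \<in> borel_measurable ?H" "X k \<in> borel_measurable ?H"
    using M X by simp_all
qed

lemma sum_step_bounds_telescope:
  fixes \<gamma> \<nu> u v F :: "nat \<Rightarrow> real"
  assumes step: "\<And>k. k < K \<Longrightarrow> \<eta> * (1 - \<gamma> k) * u k
      \<le> F k - F (Suc k) + \<eta> * (1 + s * (1 + \<nu> k)) * v k + c * (1 + \<nu> k)\<^sup>2"
    and "K \<ge> 1" "0 \<le> \<eta>" "0 \<le> s" "0 \<le> c"
    and "\<And>k. k < K \<Longrightarrow> 0 \<le> u k" "\<And>k. k < K \<Longrightarrow> 0 \<le> v k" "\<And>k. k < K \<Longrightarrow> 0 \<le> \<nu> k"
    and "lo \<le> F K"
  shows "\<eta> * (1 - Max (\<gamma> ` {..<K})) * (\<Sum>k<K. u k)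
    \<le> F 0 - lo + \<eta> * (1 + s * (1 + Max (\<nu> ` {..<K}))) * (\<Sum>k<K. v k)
       + c * (1 + Max (\<nu> ` {..<K}))\<^sup>2 * real K"
proof -
  define g where "g = Max (\<gamma> ` {..<K})"
  define n where "n = Max (\<nu> ` {..<K})"
  have uniform_step: "\<eta> * (1 - g) * u k
      \<le> F k - F (Suc k) + \<eta> * (1 + s * (1 + n)) * v k + c * (1 + n)\<^sup>2"
    if "k < K" for k
  proof -
    have "\<gamma> k \<le> g" "\<nu> k \<le> n"
      using that unfolding g_def n_def by (auto intro: Max_ge)
    then have "\<eta> * (1 - g) * u k \<le> \<eta> * (1 - \<gamma> k) * u k"
      and "\<eta> * (1 + s * (1 + \<nu> k)) * v k \<le> \<eta> * (1 + s * (1 + n)) * v k"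
      and "c * (1 + \<nu> k)\<^sup>2 \<le> c * (1 + n)\<^sup>2"
      using that assms(3-8)
      by (auto intro!: mult_right_mono mult_left_mono power_mono)
    then show ?thesis
      using step[OF that] by linarith
  qed
  have "(\<Sum>k<K. \<eta> * (1 - g) * u k)
      \<le> (\<Sum>k<K. F k - F (Suc k) + \<eta> * (1 + s * (1 + n)) * v k + c * (1 + n)\<^sup>2)"
    by (intro sum_mono uniform_step) simp
  also have "\<dots> = F 0 - F K + \<eta> * (1 + s * (1 + n)) * (\<Sum>k<K. v k) + c * (1 + n)\<^sup>2 * real K"
    by (simp add: sum.distrib sum_lessThan_telescope' sum_distrib_left)
  finally show ?thesis
    using \<open>lo \<le> F K\<close> unfolding g_def n_def by (simp add: sum_distrib_left)
qed

theorem mainTheorem15: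
  fixes P :: "'a measure" and R :: "'r measure"
    and f :: "real^'n^'m \<Rightarrow> real" and gradf :: "real^'n^'m \<Rightarrow> real^'n^'m"
    and L fstar \<beta> \<eta> :: real and B K :: nat
    and X0 Cm1 :: "real^'n^'m"
    and G :: "nat \<Rightarrow> nat \<Rightarrow> 'a \<Rightarrow> real^'n^'m"
    and \<xi> :: "nat \<Rightarrow> 'a \<Rightarrow> 'r"
    and T :: "real^'n^'m \<Rightarrow> 'r \<Rightarrow> real^'n^'m"
    and Gb C M X :: "nat \<Rightarrow> 'a \<Rightarrow> real^'n^'m"
    and \<gamma> \<nu> :: "nat \<Rightarrow> real"
  assumes P: "prob_space P"
    and grad: "\<And>x. (f has_derivative (\<lambda>h. gradf x \<bullet> h)) (at x)"
    and smooth: "\<And>x y. norm (gradf x - gradf y) \<le> L * norm (x - y)"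
    and lower: "\<And>x. f x \<ge> fstar"
    and beta: "0 < \<beta>" "\<beta> < 1" and eta: "\<eta> > 0" and Bpos: "B \<ge> 1"
    and G_meas: "\<And>k i. G k i \<in> borel_measurable P"
    and xi_meas: "\<And>k. \<xi> k \<in> P \<rightarrow>\<^sub>M R"
    and T_meas: "(\<lambda>(A, r). T A r) \<in> borel \<Otimes>\<^sub>M R \<rightarrow>\<^sub>M borel"
    and Gb_def: "\<And>k \<omega>. Gb k \<omega> = (1 / real B) *\<^sub>R (\<Sum>i<B. G k i \<omega>)"
    and C0: "\<And>\<omega>. C 0 \<omega> = \<beta> *\<^sub>R Cm1 + Gb 0 \<omega>"
    and CSuc: "\<And>k \<omega>. C (Suc k) \<omega> = \<beta> *\<^sub>R C k \<omega> + Gb (Suc k) \<omega>"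
    and M_def: "\<And>k \<omega>. M k \<omega> = \<beta> *\<^sub>R C k \<omega> + Gb k \<omega>"
    and X0: "\<And>\<omega>. X 0 \<omega> = X0"
    and XSuc: "\<And>k \<omega>. X (Suc k) \<omega> = X k \<omega> - \<eta> *\<^sub>R T (M k \<omega>) (\<xi> k \<omega>)"
    and gamma: "\<And>k. 0 \<le> \<gamma> k \<and> \<gamma> k < 1" and nu: "\<And>k. \<nu> k \<ge> 0"
    and polar1: "\<And>k. AE \<omega> in P.
        real_cond_exp P (muon_history P R G \<xi> B k) (\<lambda>\<omega>. M k \<omega> \<bullet> T (M k \<omega>) (\<xi> k \<omega>)) \<omega>
          \<ge> (1 - \<gamma> k) * nucnorm (M k \<omega>)"
    and polar2: "\<And>k. AE \<omega> in P.
        real_cond_exp P (muon_history P R G \<xi> B k) (\<lambda>\<omega>. (opnorm (T (M k \<omega>) (\<xi> k \<omega>)))\<^sup>2) \<omega>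
          \<le> (1 + \<nu> k)\<^sup>2"
    and int_f: "\<And>k. integrable P (\<lambda>\<omega>. f (X k \<omega>))"
    and int_grad: "\<And>k. integrable P (\<lambda>\<omega>. norm (gradf (X k \<omega>)))"
    and int_S: "\<And>k. integrable P (\<lambda>\<omega>. norm ((1 - \<beta>) *\<^sub>R M k \<omega> - gradf (X k \<omega>)))"
    and int_nuc: "\<And>k. integrable P (\<lambda>\<omega>. nucnorm (M k \<omega>))"
    and int_inner: "\<And>k. integrable P (\<lambda>\<omega>. M k \<omega> \<bullet> T (M k \<omega>) (\<xi> k \<omega>))"
    and int_gradT: "\<And>k. integrable P (\<lambda>\<omega>. gradf (X k \<omega>) \<bullet> T (M k \<omega>) (\<xi> k \<omega>))"
    and int_op2: "\<And>k. integrable P (\<lambda>\<omega>. (opnorm (T (M k \<omega>) (\<xi> k \<omega>)))\<^sup>2)"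
    and int_ST: "\<And>k. integrable P (\<lambda>\<omega>. norm ((1 - \<beta>) *\<^sub>R M k \<omega> - gradf (X k \<omega>))
                                      * opnorm (T (M k \<omega>) (\<xi> k \<omega>)))"
    and K: "K \<ge> 1"
  shows "\<eta> * (1 - Max (\<gamma> ` {..<K})) * (\<Sum>k<K. (\<integral>\<omega>. norm (gradf (X k \<omega>)) \<partial>P))
    \<le> f X0 - fstar
       + \<eta> * (1 + sqrt (real (min CARD('m) CARD('n))) * (1 + Max (\<nu> ` {..<K})))
           * (\<Sum>k<K. (\<integral>\<omega>. norm ((1 - \<beta>) *\<^sub>R M k \<omega> - gradf (X k \<omega>)) \<partial>P))
       + L * real (min CARD('m) CARD('n)) / 2 * \<eta>\<^sup>2 * (1 + Max (\<nu> ` {..<K}))\<^sup>2 * real K"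
proof -
  interpret prob_space P by (rule P)
  have step: "\<eta> * (1 - \<gamma> k) * (\<integral>\<omega>. norm (gradf (X k \<omega>)) \<partial>P)
      \<le> (\<integral>\<omega>. f (X k \<omega>) \<partial>P) - (\<integral>\<omega>. f (X (Suc k) \<omega>) \<partial>P)
        + \<eta> * (1 + sqrt (real (min CARD('m) CARD('n))) * (1 + \<nu> k))
            * (\<integral>\<omega>. norm ((1 - \<beta>) *\<^sub>R M k \<omega> - gradf (X k \<omega>)) \<partial>P)
        + L * real (min CARD('m) CARD('n)) / 2 * \<eta>\<^sup>2 * (1 + \<nu> k)\<^sup>2" for k
  proof -
    have X_Suc: "X (Suc k) = (\<lambda>\<omega>. X k \<omega> - \<eta> *\<^sub>R T (M k \<omega>) (\<xi> k \<omega>))"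
      using XSuc by auto
    have F: "subalgebra P (muon_history P R G \<xi> B k)"
      by (rule subalgebra_muon_history[OF G_meas xi_meas])
    note meas = muon_iterates_measurable_history[OF xi_meas T_meas Gb_def C0 CSuc M_def X0 XSuc]
    show ?thesis
      unfolding X_Suc
      by (rule muon_step_descent[OF P F grad smooth _ _ _ _ _ meas(2,1) polar1[of k] polar2[of k]
            int_f[of k] int_f[of "Suc k", unfolded X_Suc] int_grad[of k] int_S[of k] int_nuc[of k]
            int_inner[of k] int_gradT[of k] int_op2[of k] int_ST[of k]])
        (use eta beta gamma[of k] nu[of k] in auto)
  qed
  have "(\<integral>\<omega>. f (X 0 \<omega>) \<partial>P) = f X0"
    using X0 by (simp add: prob_space)
  moreover have "fstar \<le> (\<integral>\<omega>. f (X K \<omega>) \<partial>P)"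
    using integral_mono[OF _ int_f lower] by (simp add: prob_space)
  ultimately show ?thesis
    using eta lipschitz_bound_nonneg[OF smooth] nu
    by (intro sum_step_bounds_telescope[where F = "\<lambda>k. \<integral>\<omega>. f (X k \<omega>) \<partial>P", OF step K,
          unfolded \<open>(\<integral>\<omega>. f (X 0 \<omega>) \<partial>P) = f X0\<close>])
      (auto intro: integral_nonneg_AE)
qed

end
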